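(* Let $K$ be the $2$-uniform tiling of the plane whose vertex types are $[3^6]$ and $[3^2,6^2]$. If $X$ is a map on the torus that is a quotient $X=K/\Gamma$ of $K$, then the vertices of $X$ form at most $4$ orbits under ${\rm Aut}(X)$.
   Context: A map is a polyhedral map: a cellular embedding of a connected graph in a closed surface such that the intersection of any two distinct faces is empty, a single vertex, or a single edge. For a vertex $u$, the faces containing $u$ form a cyclic sequence (the face-cycle at $u$); if this cyclic sequence consists of consecutive blocks of $n_1$ $p_1$-gons, then $n_2$ $p_2$-gons, ..., then $n_k$ $p_k$-gons, with cyclically consecutive $p_i$ distinct, then $u$ is said to have type $[p_1^{n_1},\dots,p_k^{n_k}]$ (defined up to cyclic shift and reversal). A $2$-uniform tiling is an edge-to-edge tiling of the Euclidean plane $\mathbb{R}^2$ by regular polygons whose symmetry group has exactly two orbits on the set of vertices; viewed as a map on the plane, its vertices have (at most) two types, listed as $[W;Z]$. (Up to isomorphism there are exactly $20$ such tilings; there is exactly one with the vertex types named in the claim.) For a map $K$ on the plane, a quotient of $K$ on the torus is a map $X$ on the torus together with a polyhedral covering map $\eta:K\to X$ with $X=K/\Gamma$, where $\Gamma\le {\rm Aut}(K)$ is a subgroup acting without fixed vertices, edges or faces and $K/\Gamma$ is homeomorphic to the torus. ${\rm Aut}(X)$ denotes the automorphism group of the map $X$, acting on its vertex set $V(X)$. *)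

theory Defs
  imports Main
begin

text \<open>Points of the triangular lattice: (i,j) stands for i*e1 + j*e2 with
  e1 = (1,0), e2 = (1/2, sqrt 3/2). This basis is positively oriented.\<close>

type_synonym pt = "int \<times> int"

definition padd :: "pt \<Rightarrow> pt \<Rightarrow> pt" where
  "padd p q = (fst p + fst q, snd p + snd q)"

definition unit_vecs :: "pt set" where
  "unit_vecs = {(1,0), (0,1), (-1,1), (-1,0), (0,-1), (1,-1)}"

text \<open>The 2-uniform tiling K = [3^6; 3^2.6^2]: delete from the triangular lattice the
  lattice points (i,j) with i = j = 0 or i = j = 1 (mod 3) (these are the centres of the
  hexagons, which form a honeycomb of edge length sqrt 3); the six triangles around each
  deleted point are merged into a hexagon. The points with i = j = 2 (mod 3) are the
  vertices of type [3^6], all other vertices have type [3^2,6^2].\<close>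

definition hex_centre :: "pt \<Rightarrow> bool" where
  "hex_centre p \<longleftrightarrow> fst p mod 3 = snd p mod 3 \<and> fst p mod 3 \<noteq> 2"

definition VK :: "pt set" where
  "VK = {p. \<not> hex_centre p}"

definition up_tri :: "pt \<Rightarrow> pt set" where
  "up_tri p = {p, padd p (1,0), padd p (0,1)}"

definition down_tri :: "pt \<Rightarrow> pt set" where
  "down_tri p = {padd p (1,0), padd p (0,1), padd p (1,1)}"

definition hexagon :: "pt \<Rightarrow> pt set" where
  "hexagon c = (padd c) ` unit_vecs"

definition FK :: "pt set set" where
  "FK = {up_tri p | p. up_tri p \<subseteq> VK} \<union> {down_tri p | p. down_tri p \<subseteq> VK}
        \<union> {hexagon c | c. hex_centre c}"

definition EK :: "pt set set" where
  "EK = {{p, q} | p q. p \<in> VK \<and> q \<in> VK \<and> (fst q - fst p, snd q - snd p) \<in> unit_vecs}"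

definition AutK :: "(pt \<Rightarrow> pt) set" where
  "AutK = {f. bij_betw f VK VK \<and> (\<forall>v. v \<notin> VK \<longrightarrow> f v = v) \<and>
              (\<forall>F. F \<subseteq> VK \<longrightarrow> (F \<in> FK \<longleftrightarrow> f ` F \<in> FK))}"

definition orient :: "pt \<Rightarrow> pt \<Rightarrow> pt \<Rightarrow> int" where
  "orient a b c = (fst b - fst a) * (snd c - snd a) - (snd b - snd a) * (fst c - fst a)"

definition orientation_preserving :: "(pt \<Rightarrow> pt) \<Rightarrow> bool" where
  "orientation_preserving f \<longleftrightarrow>
     (\<forall>p. up_tri p \<subseteq> VK \<longrightarrow> orient (f p) (f (padd p (1,0))) (f (padd p (0,1))) > 0)"

definition subgroup_AutK :: "(pt \<Rightarrow> pt) set \<Rightarrow> bool" where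
  "subgroup_AutK G \<longleftrightarrow> G \<subseteq> AutK \<and> id \<in> G \<and> (\<forall>g\<in>G. \<forall>h\<in>G. g \<circ> h \<in> G)
      \<and> (\<forall>g\<in>G. \<exists>h\<in>G. h \<circ> g = id)"

definition acts_freely :: "(pt \<Rightarrow> pt) set \<Rightarrow> bool" where
  "acts_freely G \<longleftrightarrow> (\<forall>g\<in>G. g \<noteq> id \<longrightarrow>
      (\<forall>v\<in>VK. g v \<noteq> v) \<and> (\<forall>e\<in>EK. g ` e \<noteq> e) \<and> (\<forall>F\<in>FK. g ` F \<noteq> F))"

text \<open>Quotient map eta : K -> K/G on vertices (a vertex of X is a G-orbit).\<close>
definition eta :: "(pt \<Rightarrow> pt) set \<Rightarrow> pt \<Rightarrow> pt set" where
  "eta G v = (\<lambda>g. g v) ` G"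

definition VertX :: "(pt \<Rightarrow> pt) set \<Rightarrow> pt set set" where
  "VertX G = eta G ` VK"

definition FaceX :: "(pt \<Rightarrow> pt) set \<Rightarrow> pt set set set" where
  "FaceX G = (\<lambda>F. eta G ` F) ` FK"

definition EdgX :: "(pt \<Rightarrow> pt) set \<Rightarrow> pt set set set" where
  "EdgX G = (\<lambda>e. eta G ` e) ` EK"

text \<open>K/G is homeomorphic to the torus: G acts freely, cocompactly (finitely many vertex
  orbits) and preserving orientation (free + cocompact gives a closed surface covered by
  the plane, i.e. torus or Klein bottle; orientation preserving singles out the torus).\<close>
definition torus_quotient :: "(pt \<Rightarrow> pt) set \<Rightarrow> bool" where
  "torus_quotient G \<longleftrightarrow> subgroup_AutK G \<and> acts_freely G \<and> finite (VertX G)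
      \<and> (\<forall>g\<in>G. orientation_preserving g)"

definition polyhedral_quotient :: "(pt \<Rightarrow> pt) set \<Rightarrow> bool" where
  "polyhedral_quotient G \<longleftrightarrow>
     (\<forall>F\<in>FK. inj_on (eta G) F)
   \<and> (\<forall>F\<in>FK. \<forall>F'\<in>FK. eta G ` F = eta G ` F' \<longrightarrow> (\<exists>g\<in>G. g ` F = F'))
   \<and> (\<forall>e\<in>EK. \<forall>e'\<in>EK. eta G ` e = eta G ` e' \<longrightarrow> (\<exists>g\<in>G. g ` e = e'))
   \<and> (\<forall>A\<in>FaceX G. \<forall>B\<in>FaceX G. A \<noteq> B \<longrightarrow>
         A \<inter> B = {} \<or> card (A \<inter> B) = 1 \<or> A \<inter> B \<in> EdgX G)"

definition AutX :: "(pt \<Rightarrow> pt) set \<Rightarrow> (pt set \<Rightarrow> pt set) set" where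
  "AutX G = {a. bij_betw a (VertX G) (VertX G) \<and>
                (\<forall>A. A \<subseteq> VertX G \<longrightarrow> (A \<in> FaceX G \<longleftrightarrow> a ` A \<in> FaceX G))}"

definition AutX_orbits :: "(pt \<Rightarrow> pt) set \<Rightarrow> pt set set set" where
  "AutX_orbits G = {(\<lambda>a. a x) ` AutX G | x. x \<in> VertX G}"

end

theory Submission
  imports Defs "HOL-Library.Product_Plus"
begin

(* Identify the lattice point (i,j) with the Eisenstein integer i + j\<zeta>, \<zeta> = e^(i\<pi>/3).
   An orientation preserving automorphism g of K permutes the [3^6] vertices, and on the six
   neighbours of such a vertex s it acts as s + u \<mapsto> g s + a u for a unit a. Following the
   two hexagons along the spoke from s to s + 3u shows that the same unit works at s + 3u, hence
   g v = a v + b on all of V(K). If a \<noteq> 1, g is a rotation about a lattice point, an edge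
   midpoint or a triangle centre, and so fixes a vertex, an edge or a face of K; hence the
   elements of \<Gamma> are translations. Therefore the translations by 3\<int>^2 and the half-turn
   about the [3^6] vertex (2,2) normalise \<Gamma> and induce automorphisms of X, and modulo these
   every vertex of K is equivalent to (2,2), (1,0), (1,2) or (2,1). *)

section \<open>Eisenstein integers and their units\<close>

lemma padd_eq_plus: "padd p q = p + q"
  by (simp add: padd_def plus_prod_def)

lemma unit_vecs_iff:
  "u \<in> unit_vecs \<longleftrightarrow> u = (1,0) \<or> u = (0,1) \<or> u = (-1,1) \<or> u = (-1,0) \<or> u = (0,-1) \<or> u = (1,-1)"
  by (auto simp: unit_vecs_def)

lemma unit_vecs_neq_zero: "u \<in> unit_vecs \<Longrightarrow> u \<noteq> 0"
  by (auto simp: unit_vecs_def zero_prod_def)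

lemma uminus_unit_vecs: "uminus ` unit_vecs = unit_vecs"
  by (auto simp: unit_vecs_def)

lemma minus_in_unit_vecs: "u \<in> unit_vecs \<Longrightarrow> - u \<in> unit_vecs"
  using uminus_unit_vecs by blast

text \<open>(a1 + a2\<zeta>)(p1 + p2\<zeta>) expanded with \<zeta>^2 = \<zeta> - 1; rot60 and rot300 are
  multiplication by \<zeta> and \<zeta>^-1, and unit_vecs are the six units.\<close>

definition eis_mult :: "pt \<Rightarrow> pt \<Rightarrow> pt" where
  "eis_mult a p = (fst a * fst p - snd a * snd p, fst a * snd p + snd a * fst p + snd a * snd p)"

definition rot60 :: "pt \<Rightarrow> pt" where
  "rot60 p = (- snd p, fst p + snd p)"

definition rot300 :: "pt \<Rightarrow> pt" where
  "rot300 p = (fst p + snd p, - fst p)"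

lemma rot300_rot60 [simp]: "rot300 (rot60 p) = p"
  and rot60_rot300 [simp]: "rot60 (rot300 p) = p"
  by (simp_all add: rot60_def rot300_def)

lemma rot60_in_unit_vecs: "u \<in> unit_vecs \<Longrightarrow> rot60 u \<in> unit_vecs"
  and rot300_in_unit_vecs: "u \<in> unit_vecs \<Longrightarrow> rot300 u \<in> unit_vecs"
  unfolding unit_vecs_iff by (elim disjE; simp add: rot60_def rot300_def)+

lemma rot60_neq: "u \<in> unit_vecs \<Longrightarrow> rot60 u \<noteq> u"
  unfolding unit_vecs_iff by (elim disjE) (simp_all add: rot60_def)

lemma diff_rot60_in_unit_vecs: "u \<in> unit_vecs \<Longrightarrow> u - rot60 u \<in> unit_vecs"
  and diff_rot300_in_unit_vecs: "u \<in> unit_vecs \<Longrightarrow> u - rot300 u \<in> unit_vecs"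
  unfolding unit_vecs_iff by (elim disjE; simp add: rot60_def rot300_def)+

lemma eis_mult_add: "eis_mult a (p + q) = eis_mult a p + eis_mult a q"
  and eis_mult_diff: "eis_mult a (p - q) = eis_mult a p - eis_mult a q"
  and eis_mult_minus: "eis_mult a (- p) = - eis_mult a p"
  and eis_mult_rot60: "eis_mult a (rot60 p) = rot60 (eis_mult a p)"
  and eis_mult_rot300: "eis_mult a (rot300 p) = rot300 (eis_mult a p)"
  and eis_mult_commute: "eis_mult a p = eis_mult p a"
  by (simp_all add: eis_mult_def rot60_def rot300_def prod_eq_iff algebra_simps)

lemma eis_mult_one [simp]: "eis_mult a (1,0) = a"
  and eis_mult_one_left [simp]: "eis_mult (1,0) p = p"
  and eis_mult_zero [simp]: "eis_mult a 0 = 0"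
  by (simp_all add: eis_mult_def zero_prod_def)

lemma eis_mult_unit: "a \<in> unit_vecs \<Longrightarrow> u \<in> unit_vecs \<Longrightarrow> eis_mult a u \<in> unit_vecs"
  unfolding unit_vecs_iff by (elim disjE) (simp_all add: eis_mult_def)

lemma eis_mult_cancel_unit:
  assumes "u \<in> unit_vecs" shows "eis_mult a u = eis_mult b u \<longleftrightarrow> a = b"
  using assms unfolding unit_vecs_iff by (elim disjE) (auto simp: eis_mult_def prod_eq_iff)

lemma eis_mult_image_unit_vecs:
  assumes a: "a \<in> unit_vecs" shows "eis_mult a ` unit_vecs = unit_vecs"
proof (rule endo_inj_surj)
  show "finite unit_vecs" by (simp add: unit_vecs_def)
  show "eis_mult a ` unit_vecs \<subseteq> unit_vecs" using eis_mult_unit a by blast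
  show "inj_on (eis_mult a) unit_vecs"
    using eis_mult_cancel_unit[OF a] by (auto simp: inj_on_def eis_mult_commute[of a])
qed

lemma funpow_rot60_in_unit_vecs: "u \<in> unit_vecs \<Longrightarrow> (rot60 ^^ k) u \<in> unit_vecs"
  by (induction k) (simp_all add: rot60_in_unit_vecs)

lemma eis_mult_funpow_rot60: "eis_mult a ((rot60 ^^ k) p) = (rot60 ^^ k) (eis_mult a p)"
  by (induction k) (simp_all add: eis_mult_rot60)

lemma unit_vecs_rot60_orbit: "u \<in> unit_vecs \<Longrightarrow> \<exists>k. u = (rot60 ^^ k) (1,0)"
  unfolding unit_vecs_iff
proof (elim disjE)
  show "\<exists>k. u = (rot60 ^^ k) (1,0)" if "u = (1,0)" using that by (intro exI[of _ 0]) simp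
  show "\<exists>k. u = (rot60 ^^ k) (1,0)" if "u = (0,1)" using that by (intro exI[of _ 1]) (simp add: rot60_def)
  show "\<exists>k. u = (rot60 ^^ k) (1,0)" if "u = (-1,1)"
    using that by (intro exI[of _ 2]) (simp add: rot60_def eval_nat_numeral)
  show "\<exists>k. u = (rot60 ^^ k) (1,0)" if "u = (-1,0)"
    using that by (intro exI[of _ 3]) (simp add: rot60_def eval_nat_numeral)
  show "\<exists>k. u = (rot60 ^^ k) (1,0)" if "u = (0,-1)"
    using that by (intro exI[of _ 4]) (simp add: rot60_def eval_nat_numeral)
  show "\<exists>k. u = (rot60 ^^ k) (1,0)" if "u = (1,-1)"
    using that by (intro exI[of _ 5]) (simp add: rot60_def eval_nat_numeral)
qed

lemma rot120_neq: "u \<in> unit_vecs \<Longrightarrow> rot60 (rot60 u) \<noteq> u"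
  unfolding unit_vecs_iff by (elim disjE) (simp_all add: rot60_def)

lemma orient_unit_vecs:
  assumes "x \<in> unit_vecs" "y \<in> unit_vecs" "y - x \<in> unit_vecs" "0 < orient q (q + x) (q + y)"
  shows "y = rot60 x"
  using assms(1,2) unfolding unit_vecs_iff
  by (elim disjE) (use assms(3,4) in \<open>simp_all add: unit_vecs_def orient_def rot60_def\<close>)

lemma unit_vecs_next_neighbour:
  assumes "x \<in> unit_vecs" "y \<in> unit_vecs" "y - rot60 x \<in> unit_vecs" "y \<noteq> x"
  shows "y = rot60 (rot60 x)"
  using assms(1,2) unfolding unit_vecs_iff
  by (elim disjE) (use assms(3,4) in \<open>simp_all add: unit_vecs_def rot60_def zero_prod_def\<close>)

lemma unit_vecs_adjacent:
  assumes "w \<in> unit_vecs" "r \<in> unit_vecs" "r - w \<in> unit_vecs"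
  shows "r = rot60 w \<or> w = rot60 r"
  using assms(1,2) unfolding unit_vecs_iff
  by (elim disjE) (use assms(3) in \<open>simp_all add: unit_vecs_def rot60_def zero_prod_def\<close>)

lemma unit_vecs_common_neighbours:
  assumes "b \<in> unit_vecs" "x \<in> unit_vecs" "y \<in> unit_vecs" "b + x = rot60 b + y"
  shows "x = - b \<or> x = rot60 b"
  using assms(1,2,3) unfolding unit_vecs_iff
  by (elim disjE) (use assms(4) in \<open>simp_all add: rot60_def\<close>)

lemma unit_vecs_common_neighbour_of_centres:
  assumes b: "b \<in> unit_vecs" and "y - (b + rot60 b) \<in> unit_vecs" "y - (b + rot300 b) \<in> unit_vecs"
  shows "y = b \<or> y = b + b"
proof -
  define z where "z = y - (b + rot60 b)"
  have "z \<in> unit_vecs" "b + rot60 b + z - (b + rot300 b) \<in> unit_vecs"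
    using assms(2,3) by (simp_all add: z_def)
  then have "b + rot60 b + z = b \<or> b + rot60 b + z = b + b"
    using b unfolding unit_vecs_iff
    by (elim disjE) (simp_all add: rot60_def rot300_def unit_vecs_def)
  then show ?thesis by (simp add: z_def)
qed

text \<open>An injective map of the six units into themselves that keeps neighbouring units
  neighbouring is a rotation or a reflection; the last hypothesis rules out reflections.\<close>

lemma unit_map_eq_eis_mult:
  assumes maps: "\<And>u. u \<in> unit_vecs \<Longrightarrow> d u \<in> unit_vecs" and inj: "inj_on d unit_vecs"
    and step: "\<And>u. u \<in> unit_vecs \<Longrightarrow> d (rot60 u) - d u \<in> unit_vecs"
    and start: "d (rot60 (1,0)) = rot60 (d (1,0))"
    and u: "u \<in> unit_vecs"
  shows "d u = eis_mult (d (1,0)) u"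
proof -
  have turn: "d (rot60 (rot60 u)) = rot60 (d (rot60 u))"
    if u: "u \<in> unit_vecs" and du: "d (rot60 u) = rot60 (d u)" for u
  proof -
    have "d (rot60 (rot60 u)) = rot60 (rot60 (d u))"
    proof (rule unit_vecs_next_neighbour)
      show "d u \<in> unit_vecs" "d (rot60 (rot60 u)) \<in> unit_vecs"
        using maps u rot60_in_unit_vecs by blast+
      show "d (rot60 (rot60 u)) - rot60 (d u) \<in> unit_vecs"
        using step[OF rot60_in_unit_vecs[OF u]] du by simp
      show "d (rot60 (rot60 u)) \<noteq> d u"
        using inj_onD[OF inj] rot120_neq[OF u] u rot60_in_unit_vecs by blast
    qed
    with du show ?thesis by simp
  qed
  define e :: pt where "e = (1,0)"
  have e: "e \<in> unit_vecs" by (simp add: e_def unit_vecs_def)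
  have turn_k: "d (rot60 ((rot60 ^^ k) e)) = rot60 (d ((rot60 ^^ k) e))" for k
  proof (induction k)
    case 0 show ?case using start by (simp add: e_def)
  next
    case (Suc k) then show ?case using turn[OF funpow_rot60_in_unit_vecs[OF e, of k]] by simp
  qed
  have "d ((rot60 ^^ k) e) = (rot60 ^^ k) (d e)" for k
    by (induction k) (simp_all add: turn_k)
  moreover obtain k where "u = (rot60 ^^ k) e" using unit_vecs_rot60_orbit[OF u] by (auto simp: e_def)
  ultimately show ?thesis by (simp add: eis_mult_funpow_rot60 e_def)
qed

lemma unit_steps_induct [case_names zero step]:
  fixes P :: "pt \<Rightarrow> bool"
  assumes zero: "P 0" and step: "\<And>p u. P p \<Longrightarrow> u \<in> unit_vecs \<Longrightarrow> P (p + u)"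
  shows "P p"
proof -
  have e: "(1,0) \<in> unit_vecs" "(-1,0) \<in> unit_vecs" "(0,1) \<in> unit_vecs" "(0,-1) \<in> unit_vecs"
    by (simp_all add: unit_vecs_def)
  have row: "P (m, 0)" for m
  proof (induction m rule: int_induct[where k = 0])
    case base show ?case using zero by (simp add: zero_prod_def)
  next
    case (step1 i) then show ?case using step[OF _ e(1), of "(i,0)"] by simp
  next
    case (step2 i) then show ?case using step[OF _ e(2), of "(i,0)"] by simp
  qed
  have "P (m, n)" for m n
  proof (induction n rule: int_induct[where k = 0])
    case base show ?case using row .
  next
    case (step1 i) then show ?case using step[OF _ e(3), of "(m,i)"] by simp
  next
    case (step2 i) then show ?case using step[OF _ e(4), of "(m,i)"] by simp
  qed
  then show ?thesis by (cases p) simp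
qed

section \<open>The tiling K\<close>

definition res3 :: "pt \<Rightarrow> pt" where
  "res3 p = (fst p mod 3, snd p mod 3)"

lemma res3_add: "res3 (p + q) = res3 (res3 p + q)"
  and res3_diff: "res3 (p - q) = res3 (res3 p - q)"
  by (simp_all add: res3_def mod_add_left_eq mod_diff_left_eq)

lemma res3_diff_right: "res3 (p - q) = res3 (p - res3 q)"
  by (simp add: res3_def mod_diff_right_eq)

lemma res3_add_zero: "res3 u = (0,0) \<Longrightarrow> res3 (p + u) = res3 p"
  using res3_add[of u p] by (simp add: add.commute zero_prod_def[symmetric])

lemma hex_centre_iff_res3: "hex_centre p \<longleftrightarrow> res3 p = (0,0) \<or> res3 p = (1,1)"
  by (auto simp: hex_centre_def res3_def)

lemma mod3_cases: "(i::int) mod 3 = 0 \<or> i mod 3 = 1 \<or> i mod 3 = 2"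
  by presburger

lemma res3_cases: "res3 p \<in> {0,1,2} \<times> {0,1,2}"
  using mod3_cases[of "fst p"] mod3_cases[of "snd p"] by (elim disjE) (simp_all add: res3_def)

lemma in_VK_iff: "p \<in> VK \<longleftrightarrow> \<not> hex_centre p"
  by (simp add: VK_def)

text \<open>The vertices of type [3^6]. They are exactly the vertices lying on no hexagon, which is
  why automorphisms of K preserve them.\<close>

definition star_vertex :: "pt \<Rightarrow> bool" where
  "star_vertex p \<longleftrightarrow> res3 p = (2,2)"

lemma star_vertex_in_VK: "star_vertex s \<Longrightarrow> s \<in> VK"
  by (simp add: star_vertex_def in_VK_iff hex_centre_iff_res3)

lemma res3_add_star_vertex: "star_vertex s \<Longrightarrow> res3 (s + w) = res3 ((2,2) + w)"
  unfolding star_vertex_def by (subst res3_add) simp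

lemma res3_add_hex_centre:
  "hex_centre c \<Longrightarrow> res3 (c + w) = res3 ((0,0) + w) \<or> res3 (c + w) = res3 ((1,1) + w)"
  unfolding hex_centre_iff_res3 by (subst (1 2) res3_add) auto

lemma star_vertex_plus_unit_in_VK:
  assumes "star_vertex s" "u \<in> unit_vecs" shows "s + u \<in> VK"
  using assms(2) unfolding in_VK_iff hex_centre_iff_res3 res3_add_star_vertex[OF assms(1)] unit_vecs_iff
  by (elim disjE) (simp_all add: res3_def)

lemma hex_centre_plus_unit_in_VK:
  assumes "hex_centre c" "u \<in> unit_vecs" shows "c + u \<in> VK"
  using res3_add_hex_centre[OF assms(1), of u] assms(2)
  unfolding in_VK_iff hex_centre_iff_res3 unit_vecs_iff
  by (elim disjE) (simp_all add: res3_def)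

lemma hex_centres_next_to_star_vertex:
  assumes "star_vertex s" "u \<in> unit_vecs"
  shows "hex_centre (s + u + rot60 u)" "hex_centre (s + u + rot300 u)"
  using assms(2) unfolding hex_centre_iff_res3 add.assoc res3_add_star_vertex[OF assms(1)] unit_vecs_iff
  by (elim disjE; simp add: res3_def rot60_def rot300_def)+

lemma mem_hexagon_iff: "x \<in> hexagon c \<longleftrightarrow> x - c \<in> unit_vecs"
  by (auto simp: hexagon_def padd_eq_plus image_iff) (metis add.commute diff_add_cancel)

lemma hexagon_subset_VK: "hex_centre c \<Longrightarrow> hexagon c \<subseteq> VK"
  by (auto simp: hexagon_def padd_eq_plus hex_centre_plus_unit_in_VK)

lemma card_hexagon: "card (hexagon c) = 6"
proof -
  have "inj_on (padd c) unit_vecs" by (auto simp: inj_on_def padd_eq_plus)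
  then show ?thesis by (simp add: hexagon_def card_image) (simp add: unit_vecs_def)
qed

lemma star_vertex_notin_hexagon: "star_vertex s \<Longrightarrow> hex_centre c \<Longrightarrow> s \<notin> hexagon c"
  using star_vertex_plus_unit_in_VK[of s "c - s"] minus_in_unit_vecs[of "s - c"]
  by (auto simp: mem_hexagon_iff in_VK_iff)

lemma in_hexagon_if_not_star_vertex:
  assumes "p \<in> VK" "\<not> star_vertex p" shows "\<exists>c. hex_centre c \<and> p \<in> hexagon c"
proof -
  have r: "res3 p \<noteq> (0,0)" "res3 p \<noteq> (1,1)" "res3 p \<noteq> (2,2)"
    using assms by (auto simp: in_VK_iff hex_centre_iff_res3 star_vertex_def)
  have "\<forall>r \<in> {0,1,2} \<times> {0,1,2}. r \<noteq> (0,0) \<longrightarrow> r \<noteq> (1,1) \<longrightarrow> r \<noteq> (2,2) \<longrightarrow>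
      (\<exists>u\<in>unit_vecs. res3 (r - u) = (0,0) \<or> res3 (r - u) = (1,1))"
    by (simp add: unit_vecs_def res3_def)
  from this[rule_format, OF res3_cases r]
  have "\<exists>u\<in>unit_vecs. res3 (res3 p - u) = (0,0) \<or> res3 (res3 p - u) = (1,1)" .
  then obtain u where "u \<in> unit_vecs" "hex_centre (p - u)"
    unfolding hex_centre_iff_res3 res3_diff[of p] by blast
  then show ?thesis by (intro exI[of _ "p - u"]) (simp add: mem_hexagon_iff)
qed

lemma star_vertex_decomp:
  assumes "p \<in> VK" obtains w where "w = 0 \<or> w \<in> unit_vecs" "star_vertex (p - w)"
proof -
  have r: "res3 p \<noteq> (0,0)" "res3 p \<noteq> (1,1)"
    using assms by (auto simp: in_VK_iff hex_centre_iff_res3)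
  have "\<forall>r \<in> {0,1,2} \<times> {0,1,2}. r \<noteq> (0,0) \<longrightarrow> r \<noteq> (1,1) \<longrightarrow>
      (\<exists>w\<in>insert 0 unit_vecs. res3 (r - w) = (2,2))"
    by (simp add: unit_vecs_def res3_def)
  from this[rule_format, OF res3_cases r]
  have "\<exists>w\<in>insert 0 unit_vecs. res3 (res3 p - w) = (2,2)" .
  then show ?thesis
    using that unfolding star_vertex_def res3_diff[of p] by blast
qed

lemma star_vertex_unique_neighbour:
  assumes "star_vertex p" "star_vertex q" "p - y \<in> unit_vecs" "q - y \<in> unit_vecs"
  shows "p = q"
proof -
  have "(fst (p - y) - fst (q - y)) mod 3 = 0" "(snd (p - y) - snd (q - y)) mod 3 = 0"
    using assms(1,2) unfolding star_vertex_def res3_def by (simp_all add: mod_diff_eq[symmetric])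
  with assms(3,4) have "p - y = q - y"
    unfolding unit_vecs_iff by (elim disjE) simp_all
  then show ?thesis by simp
qed

lemma star_vertex_add_triple: "star_vertex t \<Longrightarrow> star_vertex (t + b + b + b)"
  by (simp add: star_vertex_def res3_def)

lemma star_vertex_triple: "star_vertex t \<Longrightarrow> \<exists>p. t = (2,2) + p + p + p"
proof -
  assume "star_vertex t"
  then have "fst t = 2 + 3 * ((fst t - 2) div 3)" "snd t = 2 + 3 * ((snd t - 2) div 3)"
    by (simp_all add: star_vertex_def res3_def) presburger+
  then show ?thesis
    by (intro exI[of _ "((fst t - 2) div 3, (snd t - 2) div 3)"]) (simp add: prod_eq_iff)
qed

text \<open>Besides c, the only point adjacent to both t + b and t + rot60 b is t itself.\<close>

lemma hexagon_centre_through: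
  assumes t: "star_vertex t" and b: "b \<in> unit_vecs" and c: "hex_centre c"
    and "t + b \<in> hexagon c" "t + rot60 b \<in> hexagon c"
  shows "c = t + b + rot60 b"
proof -
  have x: "c - (t + b) \<in> unit_vecs" and y: "c - (t + rot60 b) \<in> unit_vecs"
    using assms(4,5) minus_in_unit_vecs by (fastforce simp: mem_hexagon_iff)+
  have "b + (c - (t + b)) = rot60 b + (c - (t + rot60 b))" by (simp add: algebra_simps)
  from unit_vecs_common_neighbours[OF b x y this] show ?thesis
  proof
    assume "c - (t + b) = - b"
    then have "c = t" by (simp add: algebra_simps)
    with c star_vertex_in_VK[OF t] show ?thesis by (simp add: in_VK_iff)
  qed (simp add: algebra_simps)
qed

definition tri :: "pt \<Rightarrow> pt \<Rightarrow> pt set" where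
  "tri q x = {q, q + x, q + rot60 x}"

lemma tri_up_or_down:
  assumes "x \<in> unit_vecs" shows "\<exists>p. tri q x = up_tri p \<or> tri q x = down_tri p"
  using assms unfolding unit_vecs_iff
proof (elim disjE)
  assume "x = (1,0)" then show ?thesis
    by (intro exI[of _ q]) (auto simp: tri_def up_tri_def padd_eq_plus rot60_def)
next
  assume "x = (0,1)" then show ?thesis
    by (intro exI[of _ "q - (1,0)"]) (auto simp: tri_def down_tri_def padd_eq_plus rot60_def)
next
  assume "x = (-1,1)" then show ?thesis
    by (intro exI[of _ "q - (1,0)"]) (auto simp: tri_def up_tri_def padd_eq_plus rot60_def)
next
  assume "x = (-1,0)" then show ?thesis
    by (intro exI[of _ "q - (1,1)"]) (auto simp: tri_def down_tri_def padd_eq_plus rot60_def)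
next
  assume "x = (0,-1)" then show ?thesis
    by (intro exI[of _ "q - (0,1)"]) (auto simp: tri_def up_tri_def padd_eq_plus rot60_def)
next
  assume "x = (1,-1)" then show ?thesis
    by (intro exI[of _ "q - (0,1)"]) (auto simp: tri_def down_tri_def padd_eq_plus rot60_def)
qed

lemma FK_eq: "FK = {tri q x |q x. x \<in> unit_vecs \<and> tri q x \<subseteq> VK} \<union> {hexagon c |c. hex_centre c}"
proof -
  have up: "up_tri p = tri p (1,0)" and down: "down_tri p = tri (p + (1,1)) (-1,0)" for p
    by (auto simp: up_tri_def down_tri_def tri_def padd_eq_plus rot60_def)
  have units: "(1,0) \<in> unit_vecs" "(-1,0) \<in> unit_vecs"
    by (simp_all add: unit_vecs_def)
  have "{up_tri p |p. up_tri p \<subseteq> VK} \<union> {down_tri p |p. down_tri p \<subseteq> VK}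
      = {tri q x |q x. x \<in> unit_vecs \<and> tri q x \<subseteq> VK}"
  proof (intro equalityI subsetI)
    fix F assume "F \<in> {up_tri p |p. up_tri p \<subseteq> VK} \<union> {down_tri p |p. down_tri p \<subseteq> VK}"
    then show "F \<in> {tri q x |q x. x \<in> unit_vecs \<and> tri q x \<subseteq> VK}"
      unfolding up down using units by blast
  next
    fix F assume "F \<in> {tri q x |q x. x \<in> unit_vecs \<and> tri q x \<subseteq> VK}"
    then obtain q x where "x \<in> unit_vecs" "tri q x \<subseteq> VK" "F = tri q x" by blast
    with tri_up_or_down[of x q]
    show "F \<in> {up_tri p |p. up_tri p \<subseteq> VK} \<union> {down_tri p |p. down_tri p \<subseteq> VK}" by auto
  qed
  then show ?thesis unfolding FK_def by simp
qed

lemma tri_in_FK: "x \<in> unit_vecs \<Longrightarrow> tri q x \<subseteq> VK \<Longrightarrow> tri q x \<in> FK"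
  and hexagon_in_FK: "hex_centre c \<Longrightarrow> hexagon c \<in> FK"
  unfolding FK_eq by blast+

lemma FK_cases:
  assumes "F \<in> FK"
  obtains q x where "x \<in> unit_vecs" "F = tri q x" | c where "hex_centre c" "F = hexagon c"
  using assms unfolding FK_eq by blast

lemma FK_subset_VK: "F \<in> FK \<Longrightarrow> F \<subseteq> VK"
  unfolding FK_eq using hexagon_subset_VK by blast

lemma card_tri:
  assumes "x \<in> unit_vecs" shows "card (tri q x) = 3"
  using unit_vecs_neq_zero[OF assms] unit_vecs_neq_zero[OF rot60_in_unit_vecs[OF assms]] rot60_neq[OF assms]
  by (simp add: tri_def card_insert_if)

lemma tri_diff_in_unit_vecs:
  assumes x: "x \<in> unit_vecs" and "y \<in> tri q x" "z \<in> tri q x" "y \<noteq> z"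
  shows "z - y \<in> unit_vecs"
proof -
  have "x - rot60 x \<in> unit_vecs" using diff_rot60_in_unit_vecs[OF x] .
  moreover have "rot60 x - x \<in> unit_vecs" using minus_in_unit_vecs[OF calculation] by simp
  ultimately show ?thesis
    using assms rot60_in_unit_vecs[OF x] minus_in_unit_vecs[OF x] minus_in_unit_vecs[OF rot60_in_unit_vecs[OF x]]
    by (auto simp: tri_def)
qed

lemma tri_star_vertex_subset_VK:
  assumes "star_vertex s" "u \<in> unit_vecs" shows "tri s u \<subseteq> VK"
  using assms star_vertex_in_VK star_vertex_plus_unit_in_VK rot60_in_unit_vecs
  by (simp add: tri_def)

lemma hex_centre_translate: "res3 u = (0,0) \<Longrightarrow> hex_centre (p + u) \<longleftrightarrow> hex_centre p"
  by (simp add: hex_centre_iff_res3 res3_add_zero)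

lemma hex_centre_half_turn: "hex_centre ((4,4) - p) \<longleftrightarrow> hex_centre p"
proof -
  have "\<forall>r \<in> {0,1,2} \<times> {0,1,2}. (res3 ((4,4) - r) = (0,0) \<or> res3 ((4,4) - r) = (1,1)) \<longleftrightarrow>
      (r = (0,0) \<or> r = (1,1))"
    by (simp add: res3_def)
  from this[rule_format, OF res3_cases[of p]] show ?thesis
    unfolding hex_centre_iff_res3 res3_diff_right[of _ p] by simp
qed

lemma affine_image_tri: "(\<lambda>p. eis_mult c p + t) ` tri q x = tri (eis_mult c q + t) (eis_mult c x)"
  by (auto simp: tri_def eis_mult_add eis_mult_rot60 algebra_simps)

lemma affine_image_hexagon:
  assumes c: "c \<in> unit_vecs"
  shows "(\<lambda>p. eis_mult c p + t) ` hexagon h = hexagon (eis_mult c h + t)"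
proof -
  have "(\<lambda>p. eis_mult c p + t) ` hexagon h = (\<lambda>u. eis_mult c h + t + u) ` (eis_mult c ` unit_vecs)"
    by (simp add: hexagon_def padd_eq_plus image_image eis_mult_add algebra_simps)
  then show ?thesis by (simp add: eis_mult_image_unit_vecs[OF c] hexagon_def padd_eq_plus)
qed

lemma affine_image_FK:
  assumes c: "c \<in> unit_vecs" and hc: "\<And>p. hex_centre (eis_mult c p + t) \<longleftrightarrow> hex_centre p"
    and F: "F \<in> FK"
  shows "(\<lambda>p. eis_mult c p + t) ` F \<in> FK"
  using F
proof (cases rule: FK_cases)
  case (1 q x)
  have "(\<lambda>p. eis_mult c p + t) ` F \<subseteq> VK"
    using FK_subset_VK[OF F] hc by (auto simp: in_VK_iff)
  then show ?thesis
    using 1 affine_image_tri tri_in_FK eis_mult_unit[OF c] by metis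
next
  case (2 h)
  then show ?thesis
    using affine_image_hexagon[OF c] hexagon_in_FK hc by metis
qed

section \<open>Orientation preserving automorphisms of K are affine\<close>

lemma AutK_bij_betw: "g \<in> AutK \<Longrightarrow> bij_betw g VK VK"
  by (simp add: AutK_def)

lemma AutK_inj_on: "g \<in> AutK \<Longrightarrow> inj_on g VK"
  using AutK_bij_betw bij_betw_imp_inj_on by blast

lemma AutK_in_VK: "g \<in> AutK \<Longrightarrow> v \<in> VK \<Longrightarrow> g v \<in> VK"
  using AutK_bij_betw bij_betwE by blast

lemma AutK_image_VK: "g \<in> AutK \<Longrightarrow> g ` VK = VK"
  using AutK_bij_betw bij_betw_imp_surj_on by blast

lemma AutK_image_FK_iff: "g \<in> AutK \<Longrightarrow> F \<subseteq> VK \<Longrightarrow> g ` F \<in> FK \<longleftrightarrow> F \<in> FK"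
  by (simp add: AutK_def)

lemma AutK_image_FK: "g \<in> AutK \<Longrightarrow> F \<in> FK \<Longrightarrow> g ` F \<in> FK"
  using AutK_image_FK_iff FK_subset_VK by blast

lemma AutK_card_image: "g \<in> AutK \<Longrightarrow> F \<subseteq> VK \<Longrightarrow> card (g ` F) = card F"
  using AutK_inj_on card_image inj_on_subset by blast

lemma AutK_image_tri:
  assumes g: "g \<in> AutK" and x: "x \<in> unit_vecs" and T: "tri q x \<subseteq> VK"
  obtains q' x' where "x' \<in> unit_vecs" "g ` tri q x = tri q' x'"
proof -
  have "g ` tri q x \<in> FK" using AutK_image_FK[OF g tri_in_FK[OF x T]] .
  moreover have "card (g ` tri q x) = 3" using AutK_card_image[OF g T] card_tri[OF x] by simp
  ultimately show ?thesis
    using that card_hexagon by (elim FK_cases) auto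
qed

lemma AutK_tri_diff:
  assumes g: "g \<in> AutK" and x: "x \<in> unit_vecs" and T: "tri q x \<subseteq> VK"
    and yz: "y \<in> tri q x" "z \<in> tri q x" "y \<noteq> z"
  shows "g z - g y \<in> unit_vecs"
proof -
  obtain q' x' where x': "x' \<in> unit_vecs" and img: "g ` tri q x = tri q' x'"
    using AutK_image_tri[OF g x T] .
  have "g y \<noteq> g z" using AutK_inj_on[OF g] yz T by (meson inj_on_contraD subsetD)
  with yz show ?thesis using tri_diff_in_unit_vecs[OF x'] img by blast
qed

lemma AutK_image_hexagon:
  assumes g: "g \<in> AutK" and c: "hex_centre c"
  obtains c' where "hex_centre c'" "g ` hexagon c = hexagon c'"
proof -
  have "g ` hexagon c \<in> FK" using AutK_image_FK[OF g hexagon_in_FK[OF c]] .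
  moreover have "card (g ` hexagon c) = 6"
    using AutK_card_image[OF g hexagon_subset_VK[OF c]] card_hexagon by simp
  ultimately show ?thesis
    using that card_tri by (elim FK_cases) auto
qed

lemma AutK_star_vertex:
  assumes g: "g \<in> AutK" and s: "star_vertex s" shows "star_vertex (g s)"
proof (rule ccontr)
  assume "\<not> star_vertex (g s)"
  then obtain c where c: "hex_centre c" "g s \<in> hexagon c"
    using in_hexagon_if_not_star_vertex AutK_in_VK[OF g star_vertex_in_VK[OF s]] by blast
  define F where "F = {v \<in> VK. g v \<in> hexagon c}"
  have FV: "F \<subseteq> VK" by (auto simp: F_def)
  have "hexagon c \<subseteq> g ` VK"
    using AutK_image_VK[OF g] hexagon_subset_VK[OF c(1)] by simp
  then have gF: "g ` F = hexagon c" by (auto simp: F_def)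
  then have "F \<in> FK" using AutK_image_FK_iff[OF g FV] hexagon_in_FK[OF c(1)] by simp
  moreover have "card F = 6" using AutK_card_image[OF g FV] gF card_hexagon by simp
  moreover have "s \<in> F" using c(2) star_vertex_in_VK[OF s] by (simp add: F_def)
  ultimately show False
    using card_tri star_vertex_notin_hexagon[OF s] by (elim FK_cases) auto
qed

definition linear_at :: "(pt \<Rightarrow> pt) \<Rightarrow> pt \<Rightarrow> pt \<Rightarrow> bool" where
  "linear_at g s a \<longleftrightarrow> (\<forall>u\<in>unit_vecs. g (s + u) = g s + eis_mult a u)"

lemma AutK_linear_at_star_vertex:
  assumes g: "g \<in> AutK" and op: "orientation_preserving g" and s: "star_vertex s"
  obtains a where "a \<in> unit_vecs" "linear_at g s a"
proof -
  define d where "d u = g (s + u) - g s" for u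
  have T: "tri s u \<subseteq> VK" if "u \<in> unit_vecs" for u
    using tri_star_vertex_subset_VK[OF s that] .
  have maps: "d u \<in> unit_vecs" if u: "u \<in> unit_vecs" for u
    using AutK_tri_diff[OF g u T[OF u], of s "s + u"] unit_vecs_neq_zero[OF u]
    by (simp add: tri_def d_def)
  have step: "d (rot60 u) - d u \<in> unit_vecs" if u: "u \<in> unit_vecs" for u
    using AutK_tri_diff[OF g u T[OF u], of "s + u" "s + rot60 u"] rot60_neq[OF u]
    by (simp add: tri_def d_def)
  have inj: "inj_on d unit_vecs"
  proof (rule inj_onI)
    fix u u' assume "u \<in> unit_vecs" "u' \<in> unit_vecs" "d u = d u'"
    then have "g (s + u) = g (s + u')" by (simp add: d_def)
    with \<open>u \<in> unit_vecs\<close> \<open>u' \<in> unit_vecs\<close> have "s + u = s + u'"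
      using inj_onD[OF AutK_inj_on[OF g]] star_vertex_plus_unit_in_VK[OF s] by blast
    then show "u = u'" by simp
  qed
  have e: "(1,0) \<in> unit_vecs" "(0,1) \<in> unit_vecs" by (simp_all add: unit_vecs_def)
  have "up_tri s \<subseteq> VK" using T[OF e(1)] by (simp add: up_tri_def tri_def padd_eq_plus rot60_def)
  then have "0 < orient (g s) (g (padd s (1,0))) (g (padd s (0,1)))"
    using op unfolding orientation_preserving_def by blast
  then have "0 < orient (g s) (g s + d (1,0)) (g s + d (0,1))"
    by (simp add: padd_eq_plus d_def)
  then have "d (0,1) = rot60 (d (1,0))"
    using orient_unit_vecs maps[OF e(1)] maps[OF e(2)] step[OF e(1)] by (simp add: rot60_def)
  then have "d u = eis_mult (d (1,0)) u" if "u \<in> unit_vecs" for u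
    using unit_map_eq_eis_mult[OF maps inj step _ that] by (simp add: rot60_def)
  then show ?thesis
    using that maps[OF e(1)] by (simp add: linear_at_def d_def algebra_simps)
qed

context
  fixes g :: "pt \<Rightarrow> pt" and s a :: pt
  assumes g: "g \<in> AutK" and s: "star_vertex s" and a: "a \<in> unit_vecs" and lin: "linear_at g s a"
begin

lemma AutK_image_hexagon_at_star_vertex:
  assumes x: "x \<in> unit_vecs"
  shows "g ` hexagon (s + x + rot60 x) = hexagon (g s + eis_mult a x + rot60 (eis_mult a x))"
proof -
  have c: "hex_centre (s + x + rot60 x)" using hex_centres_next_to_star_vertex(1)[OF s x] .
  obtain c' where c': "hex_centre c'" "g ` hexagon (s + x + rot60 x) = hexagon c'"
    using AutK_image_hexagon[OF g c] .
  have "s + x \<in> hexagon (s + x + rot60 x)" "s + rot60 x \<in> hexagon (s + x + rot60 x)"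
    using minus_in_unit_vecs[OF rot60_in_unit_vecs[OF x]] minus_in_unit_vecs[OF x]
    by (simp_all add: mem_hexagon_iff)
  then have "g s + eis_mult a x \<in> hexagon c'" "g s + rot60 (eis_mult a x) \<in> hexagon c'"
    using c'(2) lin x rot60_in_unit_vecs[OF x] by (force simp: linear_at_def eis_mult_rot60)+
  then have "c' = g s + eis_mult a x + rot60 (eis_mult a x)"
    using hexagon_centre_through[OF AutK_star_vertex[OF g s] eis_mult_unit[OF a x] c'(1)] by blast
  with c'(2) show ?thesis by simp
qed

text \<open>The two hexagons at s + u share the edge from s + u to s + u + u, and g maps them to the
  two hexagons at g s + a u.\<close>

lemma AutK_linear_at_second_neighbour:
  assumes u: "u \<in> unit_vecs"
  shows "g (s + u + u) = g s + eis_mult a (u + u)"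
proof -
  define b where "b = eis_mult a u"
  have b: "b \<in> unit_vecs" using eis_mult_unit[OF a u] by (simp add: b_def)
  have "s + u + u \<in> hexagon (s + u + rot60 u)" "s + u + u \<in> hexagon (s + rot300 u + u)"
    using diff_rot60_in_unit_vecs[OF u] diff_rot300_in_unit_vecs[OF u]
    by (simp_all add: mem_hexagon_iff algebra_simps)
  then have "g (s + u + u) \<in> hexagon (g s + b + rot60 b)" "g (s + u + u) \<in> hexagon (g s + rot300 b + b)"
    using AutK_image_hexagon_at_star_vertex[OF u]
      AutK_image_hexagon_at_star_vertex[OF rot300_in_unit_vecs[OF u]]
    by (auto simp: b_def eis_mult_rot300)
  then have "g (s + u + u) - g s - (b + rot60 b) \<in> unit_vecs"
    "g (s + u + u) - g s - (b + rot300 b) \<in> unit_vecs"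
    by (simp_all add: mem_hexagon_iff algebra_simps)
  then have "g (s + u + u) - g s = b \<or> g (s + u + u) - g s = b + b"
    using unit_vecs_common_neighbour_of_centres[OF b] by (simp add: diff_diff_eq)
  moreover have "g (s + u + u) \<noteq> g (s + u)"
  proof
    assume "g (s + u + u) = g (s + u)"
    moreover have "s + u + u \<in> VK"
      using \<open>s + u + u \<in> hexagon (s + u + rot60 u)\<close>
        hexagon_subset_VK[OF hex_centres_next_to_star_vertex(1)[OF s u]] by blast
    ultimately have "s + u + u = s + u"
      using inj_onD[OF AutK_inj_on[OF g]] star_vertex_plus_unit_in_VK[OF s u] by blast
    then show False using unit_vecs_neq_zero[OF u] by simp
  qed
  ultimately show ?thesis
    using lin u by (auto simp: linear_at_def b_def eis_mult_add algebra_simps)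
qed

lemma AutK_linear_at_propagate:
  assumes op: "orientation_preserving g" and u: "u \<in> unit_vecs"
  shows "g (s + u + u + u) = g s + eis_mult a (u + u + u)" and "linear_at g (s + u + u + u) a"
proof -
  define s' where "s' = s + u + u + u"
  define b where "b = eis_mult a u"
  have s': "star_vertex s'" using star_vertex_add_triple[OF s] by (simp add: s'_def)
  have gt: "star_vertex (g s + b + b + b)"
    using star_vertex_add_triple[OF AutK_star_vertex[OF g s]] .
  have second: "g (s' - u) = g s + b + b"
    using AutK_linear_at_second_neighbour[OF u] by (simp add: s'_def b_def eis_mult_add)
  have "g s' - g (s' - u) \<in> unit_vecs"
    using AutK_tri_diff[OF g minus_in_unit_vecs[OF u] tri_star_vertex_subset_VK[OF s' minus_in_unit_vecs[OF u]],
        of "s' + - u" s'] unit_vecs_neq_zero[OF u]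
    by (simp add: tri_def)
  then have "g s' - (g s + b + b) \<in> unit_vecs" by (simp add: second)
  moreover have "(g s + b + b + b) - (g s + b + b) \<in> unit_vecs"
    using eis_mult_unit[OF a u] by (simp add: b_def)
  ultimately have gs': "g s' = g s + b + b + b"
    using star_vertex_unique_neighbour[OF AutK_star_vertex[OF g s'] gt] by blast
  then show "g (s + u + u + u) = g s + eis_mult a (u + u + u)"
    by (simp add: s'_def b_def eis_mult_add)
  obtain a' where a': "a' \<in> unit_vecs" "linear_at g s' a'"
    using AutK_linear_at_star_vertex[OF g op s'] .
  have "g (s' - u) = g s' + eis_mult a' (- u)"
    using a'(2) minus_in_unit_vecs[OF u] unfolding linear_at_def by (metis diff_conv_add_uminus)
  then have "eis_mult a' u = eis_mult a u"
    using second gs' by (simp add: eis_mult_minus b_def algebra_simps)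
  then have "a' = a" using eis_mult_cancel_unit[OF u] by blast
  with a'(2) show "linear_at g (s + u + u + u) a" by (simp add: s'_def)
qed

end

lemma AutK_linear_at_star_lattice:
  assumes g: "g \<in> AutK" and op: "orientation_preserving g" and s0: "star_vertex s0"
    and a: "a \<in> unit_vecs" "linear_at g s0 a"
  shows "g (s0 + p + p + p) = g s0 + eis_mult a (p + p + p) \<and> linear_at g (s0 + p + p + p) a"
proof (induction p rule: unit_steps_induct)
  case zero then show ?case using a(2) by simp
next
  case (step p u)
  let ?s = "s0 + p + p + p"
  have s: "star_vertex ?s" using star_vertex_add_triple[OF s0] .
  have "s0 + (p + u) + (p + u) + (p + u) = ?s + u + u + u" by (simp add: algebra_simps)
  with AutK_linear_at_propagate[OF g s a(1) _ op step(2)] step(1) show ?case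
    by (simp add: eis_mult_add algebra_simps)
qed

lemma AutK_affine:
  assumes g: "g \<in> AutK" and op: "orientation_preserving g"
  obtains a b where "a \<in> unit_vecs" "\<forall>v\<in>VK. g v = eis_mult a v + b"
proof -
  define s0 :: pt where "s0 = (2,2)"
  have s0: "star_vertex s0" by (simp add: s0_def star_vertex_def res3_def)
  obtain a where a: "a \<in> unit_vecs" "linear_at g s0 a"
    using AutK_linear_at_star_vertex[OF g op s0] .
  note lattice = AutK_linear_at_star_lattice[OF g op s0 a]
  have "g v = eis_mult a v + (g s0 - eis_mult a s0)" if v: "v \<in> VK" for v
  proof -
    obtain w where w: "w = 0 \<or> w \<in> unit_vecs" "star_vertex (v - w)"
      using star_vertex_decomp[OF v] .
    obtain p where p: "v - w = s0 + p + p + p"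
      using star_vertex_triple[OF w(2)] by (auto simp: s0_def)
    have "g v = g (v - w) + eis_mult a w"
    proof (cases "w = 0")
      case False
      with w(1) have "w \<in> unit_vecs" by simp
      with lattice[of p] show ?thesis unfolding p[symmetric] linear_at_def by (metis diff_add_cancel)
    qed simp
    also have "\<dots> = g s0 + eis_mult a (v - s0)"
      using lattice[of p] p by (simp add: eis_mult_add[symmetric] algebra_simps)
    finally show ?thesis by (simp add: eis_mult_diff)
  qed
  with a(1) that show ?thesis by blast
qed

section \<open>Free automorphisms of K are translations\<close>

context
  fixes g :: "pt \<Rightarrow> pt" and a b :: pt
  assumes g: "g \<in> AutK" and a: "a \<in> unit_vecs" and affine: "\<forall>v\<in>VK. g v = eis_mult a v + b"
    and free_vertex: "\<forall>v\<in>VK. g v \<noteq> v" and free_edge: "\<forall>e\<in>EK. g ` e \<noteq> e"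
    and free_face: "\<forall>F\<in>FK. g ` F \<noteq> F"
begin

text \<open>Hexagon centres are surrounded by vertices of K, and g maps V(K) into itself.\<close>

lemma affine_image_in_VK:
  assumes "x - y \<in> unit_vecs" "eis_mult a y + b = x" shows "x \<in> VK"
proof (rule ccontr)
  assume x: "x \<notin> VK"
  then have "hex_centre x" by (simp add: in_VK_iff)
  from hex_centre_plus_unit_in_VK[OF this minus_in_unit_vecs[OF assms(1)]] have "y \<in> VK" by simp
  then have "g y \<in> VK" using AutK_in_VK[OF g] by blast
  moreover have "g y = x" using affine \<open>y \<in> VK\<close> assms(2) by simp
  ultimately show False using x by simp
qed

lemma affine_no_fixed_point: "eis_mult a x + b \<noteq> x"
proof
  assume fixed: "eis_mult a x + b = x"
  show False
  proof (cases "x \<in> VK")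
    case True with fixed free_vertex affine show False by auto
  next
    case False
    then have c: "hex_centre x" by (simp add: in_VK_iff)
    have "g ` hexagon x = (\<lambda>u. g (x + u)) ` unit_vecs"
      by (simp add: hexagon_def padd_eq_plus image_image)
    also have "\<dots> = (\<lambda>u. x + u) ` (eis_mult a ` unit_vecs)"
      unfolding image_image
    proof (rule image_cong[OF refl])
      fix u assume "u \<in> unit_vecs"
      then have "g (x + u) = eis_mult a x + b + eis_mult a u"
        using affine hex_centre_plus_unit_in_VK[OF c] by (simp add: eis_mult_add algebra_simps)
      then show "g (x + u) = x + eis_mult a u" using fixed by simp
    qed
    also have "\<dots> = hexagon x"
      by (simp add: eis_mult_image_unit_vecs[OF a] hexagon_def padd_eq_plus)
    finally show False using free_face hexagon_in_FK[OF c] by blast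
  qed
qed

lemma affine_no_swapped_edge:
  assumes w: "w \<in> unit_vecs" and "eis_mult a p + b = p + w" "eis_mult a (p + w) + b = p"
  shows False
proof -
  have "p + w \<in> VK" "p \<in> VK"
    using affine_image_in_VK[of "p + w" p] affine_image_in_VK[of p "p + w"] assms minus_in_unit_vecs[OF w]
    by simp_all
  moreover have "(fst (p + w) - fst p, snd (p + w) - snd p) \<in> unit_vecs" using w by simp
  ultimately have "{p, p + w} \<in> EK" unfolding EK_def by blast
  moreover have "g ` {p, p + w} = {p, p + w}"
    using affine assms \<open>p \<in> VK\<close> \<open>p + w \<in> VK\<close> by auto
  ultimately show False using free_edge by blast
qed

lemma affine_no_rotated_triangle:
  assumes w: "w \<in> unit_vecs" and r: "r \<in> unit_vecs" "r - w \<in> unit_vecs"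
    and "eis_mult a p + b = p + w" "eis_mult a (p + w) + b = p + r" "eis_mult a (p + r) + b = p"
  shows False
proof -
  have V: "p \<in> VK" "p + w \<in> VK" "p + r \<in> VK"
    using affine_image_in_VK[of p "p + r"] affine_image_in_VK[of "p + w" p]
      affine_image_in_VK[of "p + r" "p + w"] assms minus_in_unit_vecs[OF r(1)]
    by simp_all
  have "{p, p + w, p + r} \<in> FK"
    using unit_vecs_adjacent[OF w r] tri_in_FK[OF w, of p] tri_in_FK[OF r(1), of p] V
    by (auto simp: tri_def insert_commute)
  moreover have "g ` {p, p + w, p + r} = {p, p + w, p + r}"
    using affine assms V by auto
  ultimately show False using free_face by blast
qed

text \<open>If 1 - a is a unit, the centre of the rotation p \<mapsto> a p + b is a lattice point.\<close>

lemma affine_not_rot60: "a \<noteq> (0,1)" "a \<noteq> (1,-1)"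
proof -
  obtain b1 b2 where b: "b = (b1, b2)" by (cases b)
  show "a \<noteq> (0,1)"
    using affine_no_fixed_point[of "(- b2, b1 + b2)"] by (auto simp: b eis_mult_def)
  show "a \<noteq> (1,-1)"
    using affine_no_fixed_point[of "(b1 + b2, - b1)"] by (auto simp: b eis_mult_def)
qed

text \<open>The centre b/2 of a half-turn is a lattice point or the midpoint of a unit edge.\<close>

lemma affine_not_half_turn: "a \<noteq> (-1,0)"
proof
  assume a: "a = (-1,0)"
  obtain b1 b2 where b: "b = (b1, b2)" by (cases b)
  have "\<exists>k. b1 = 2 * k \<or> b1 = 2 * k + 1" "\<exists>l. b2 = 2 * l \<or> b2 = 2 * l + 1"
    by presburger+
  then obtain k l where "b1 = 2 * k \<or> b1 = 2 * k + 1" "b2 = 2 * l \<or> b2 = 2 * l + 1"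
    by blast
  then show False
  proof (elim disjE)
    assume "b1 = 2 * k" "b2 = 2 * l" then show False
      using affine_no_fixed_point[of "(k, l)"] by (simp add: a b eis_mult_def)
  next
    assume "b1 = 2 * k + 1" "b2 = 2 * l" then show False
      using affine_no_swapped_edge[of "(1,0)" "(k,l)"] by (simp add: a b eis_mult_def unit_vecs_def)
  next
    assume "b1 = 2 * k" "b2 = 2 * l + 1" then show False
      using affine_no_swapped_edge[of "(0,1)" "(k,l)"] by (simp add: a b eis_mult_def unit_vecs_def)
  next
    assume "b1 = 2 * k + 1" "b2 = 2 * l + 1" then show False
      using affine_no_swapped_edge[of "(1,-1)" "(k,l+1)"] by (simp add: a b eis_mult_def unit_vecs_def)
  qed
qed

text \<open>The centre of a rotation by 120 or 240 degrees is a lattice point or the centre of a unit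
  triangle, according to the residue of b1 - b2 mod 3.\<close>

lemma affine_not_rot120: "a \<noteq> (-1,1)"
proof
  assume a: "a = (-1,1)"
  obtain b1 b2 where b: "b = (b1, b2)" by (cases b)
  have "\<exists>k. b1 = b2 + 3 * k \<or> b1 = b2 + 3 * k + 1 \<or> b1 = b2 + 3 * k + 2"
    by presburger
  then obtain k where "b1 = b2 + 3 * k \<or> b1 = b2 + 3 * k + 1 \<or> b1 = b2 + 3 * k + 2" ..
  then show False
  proof (elim disjE)
    assume "b1 = b2 + 3 * k" then show False
      using affine_no_fixed_point[of "(k, b2 + k)"] by (simp add: a b eis_mult_def)
  next
    assume "b1 = b2 + 3 * k + 1" then show False
      using affine_no_rotated_triangle[of "(1,0)" "(0,1)" "(k, k + b2)"]
      by (simp add: a b eis_mult_def unit_vecs_def)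
  next
    assume "b1 = b2 + 3 * k + 2" then show False
      using affine_no_rotated_triangle[of "(0,1)" "(-1,1)" "(k + 1, k + b2)"]
      by (simp add: a b eis_mult_def unit_vecs_def)
  qed
qed

lemma affine_not_rot240: "a \<noteq> (0,-1)"
proof
  assume a: "a = (0,-1)"
  obtain b1 b2 where b: "b = (b1, b2)" by (cases b)
  have "\<exists>k. b2 = b1 + 3 * k \<or> b2 = b1 + 3 * k + 1 \<or> b2 = b1 + 3 * k + 2"
    by presburger
  then obtain k where "b2 = b1 + 3 * k \<or> b2 = b1 + 3 * k + 1 \<or> b2 = b1 + 3 * k + 2" ..
  then show False
  proof (elim disjE)
    assume "b2 = b1 + 3 * k" then show False
      using affine_no_fixed_point[of "(k + b1, k)"] by (simp add: a b eis_mult_def)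
  next
    assume "b2 = b1 + 3 * k + 1" then show False
      using affine_no_rotated_triangle[of "(0,1)" "(1,0)" "(k + b1, k)"]
      by (simp add: a b eis_mult_def unit_vecs_def)
  next
    assume "b2 = b1 + 3 * k + 2" then show False
      using affine_no_rotated_triangle[of "(1,0)" "(1,-1)" "(k + b1, k + 1)"]
      by (simp add: a b eis_mult_def unit_vecs_def)
  qed
qed

lemma affine_is_translation: "a = (1,0)"
  using a affine_not_rot60 affine_not_half_turn affine_not_rot120 affine_not_rot240
  unfolding unit_vecs_iff by blast

end

lemma free_AutK_is_translation:
  assumes g: "g \<in> AutK" and op: "orientation_preserving g"
    and free: "g \<noteq> id \<longrightarrow> (\<forall>v\<in>VK. g v \<noteq> v) \<and> (\<forall>e\<in>EK. g ` e \<noteq> e) \<and> (\<forall>F\<in>FK. g ` F \<noteq> F)"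
  obtains w where "\<forall>v\<in>VK. g v = v + w"
proof (cases "g = id")
  case True with that show ?thesis by (metis add_0_right id_apply)
next
  case False
  obtain a b where a: "a \<in> unit_vecs" and affine: "\<forall>v\<in>VK. g v = eis_mult a v + b"
    using AutK_affine[OF g op] .
  have "a = (1,0)"
    using affine_is_translation[OF g a affine] free False by blast
  then show ?thesis using affine that[of b] by (simp add: add.commute)
qed

section \<open>Automorphisms of the quotient\<close>

definition AutX_orbit :: "(pt \<Rightarrow> pt) set \<Rightarrow> pt set \<Rightarrow> pt set set" where
  "AutX_orbit G X = (\<lambda>a. a X) ` AutX G"

lemma AutX_orbits_eq: "AutX_orbits G = AutX_orbit G ` VertX G"
  by (auto simp: AutX_orbits_def AutX_orbit_def)

lemma AutX_comp: "a \<in> AutX G \<Longrightarrow> c \<in> AutX G \<Longrightarrow> a \<circ> c \<in> AutX G"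
proof -
  assume a: "a \<in> AutX G" and c: "c \<in> AutX G"
  have ba: "bij_betw a (VertX G) (VertX G)" and bc: "bij_betw c (VertX G) (VertX G)"
    using a c by (auto simp: AutX_def)
  have "A \<in> FaceX G \<longleftrightarrow> (a \<circ> c) ` A \<in> FaceX G" if A: "A \<subseteq> VertX G" for A
  proof -
    have cA: "c ` A \<subseteq> VertX G" using A bc bij_betw_imp_surj_on by blast
    have "A \<in> FaceX G \<longleftrightarrow> c ` A \<in> FaceX G" using c A by (auto simp: AutX_def)
    also have "\<dots> \<longleftrightarrow> a ` (c ` A) \<in> FaceX G" using a cA by (auto simp: AutX_def)
    finally show ?thesis by (simp add: image_comp)
  qed
  with bij_betw_trans[OF bc ba] show ?thesis by (simp add: AutX_def)
qed

lemma AutX_orbit_eq: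
  assumes M: "M \<in> AutX G" and M': "M' \<in> AutX G" and inv: "M' (M X) = X"
  shows "AutX_orbit G (M X) = AutX_orbit G X"
proof
  show "AutX_orbit G (M X) \<subseteq> AutX_orbit G X"
  proof
    fix Y assume "Y \<in> AutX_orbit G (M X)"
    then obtain a where a: "a \<in> AutX G" "Y = a (M X)" by (auto simp: AutX_orbit_def)
    then show "Y \<in> AutX_orbit G X"
      unfolding AutX_orbit_def using AutX_comp[OF a(1) M] by (intro image_eqI[where x = "a \<circ> M"]) simp_all
  qed
  show "AutX_orbit G X \<subseteq> AutX_orbit G (M X)"
  proof
    fix Y assume "Y \<in> AutX_orbit G X"
    then obtain a where a: "a \<in> AutX G" "Y = a X" by (auto simp: AutX_orbit_def)
    then show "Y \<in> AutX_orbit G (M X)"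
      unfolding AutX_orbit_def using AutX_comp[OF a(1) M'] inv
      by (intro image_eqI[where x = "a \<circ> M'"]) simp_all
  qed
qed

locale torus_quotient_group =
  fixes G :: "(pt \<Rightarrow> pt) set"
  assumes torus: "torus_quotient G"
begin

lemma G_subset_AutK: "G \<subseteq> AutK"
  using torus by (simp add: torus_quotient_def subgroup_AutK_def)

lemma translation_of_G:
  assumes g: "g \<in> G" obtains w where "\<forall>v\<in>VK. g v = v + w"
proof (rule free_AutK_is_translation)
  show "g \<in> AutK" using G_subset_AutK g by blast
  show "orientation_preserving g" using torus g by (simp add: torus_quotient_def)
  show "g \<noteq> id \<longrightarrow> (\<forall>v\<in>VK. g v \<noteq> v) \<and> (\<forall>e\<in>EK. g ` e \<noteq> e) \<and> (\<forall>F\<in>FK. g ` F \<noteq> F)"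
    using torus g by (simp add: torus_quotient_def acts_freely_def)
qed (use that in blast)

definition transl_vecs :: "pt set" where
  "transl_vecs = {w. \<exists>g\<in>G. \<forall>v\<in>VK. g v = v + w}"

lemma eta_eq:
  assumes v: "v \<in> VK" shows "eta G v = (\<lambda>w. v + w) ` transl_vecs"
proof
  show "eta G v \<subseteq> (\<lambda>w. v + w) ` transl_vecs"
  proof
    fix x assume "x \<in> eta G v"
    then obtain g where g: "g \<in> G" "x = g v" by (auto simp: eta_def)
    obtain w where w: "\<forall>v\<in>VK. g v = v + w" using translation_of_G[OF g(1)] .
    then have "w \<in> transl_vecs" using g(1) by (auto simp: transl_vecs_def)
    with g(2) w v show "x \<in> (\<lambda>w. v + w) ` transl_vecs" by blast
  qed
  show "(\<lambda>w. v + w) ` transl_vecs \<subseteq> eta G v"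
  proof
    fix x assume "x \<in> (\<lambda>w. v + w) ` transl_vecs"
    then obtain w g where "x = v + w" "g \<in> G" "\<forall>v\<in>VK. g v = v + w"
      by (auto simp: transl_vecs_def)
    with v have "x = g v" by simp
    with \<open>g \<in> G\<close> show "x \<in> eta G v" unfolding eta_def by blast
  qed
qed

lemma uminus_transl_vecs: "uminus ` transl_vecs = transl_vecs"
proof -
  have "- w \<in> transl_vecs" if w: "w \<in> transl_vecs" for w
  proof -
    obtain g where g: "g \<in> G" "\<forall>v\<in>VK. g v = v + w"
      using w by (auto simp: transl_vecs_def)
    obtain h where h: "h \<in> G" "h \<circ> g = id"
      using torus g(1) by (auto simp: torus_quotient_def subgroup_AutK_def)
    obtain w' where w': "\<forall>v\<in>VK. h v = v + w'" using translation_of_G[OF h(1)] .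
    define s0 :: pt where "s0 = (2,2)"
    have s0: "s0 \<in> VK" by (simp add: s0_def in_VK_iff hex_centre_def)
    then have "g s0 \<in> VK" using AutK_in_VK G_subset_AutK g(1) by blast
    have "s0 = h (g s0)" using h(2) by (metis comp_apply id_apply)
    also have "\<dots> = s0 + w + w'" using g(2) w' s0 \<open>g s0 \<in> VK\<close> by simp
    finally have "w' = - w" by (simp add: algebra_simps eq_neg_iff_add_eq_0)
    with h(1) w' show ?thesis by (auto simp: transl_vecs_def)
  qed
  then show ?thesis by (auto intro: image_eqI[of _ uminus "- _"])
qed

definition induces_aut :: "(pt \<Rightarrow> pt) \<Rightarrow> bool" where
  "induces_aut f \<longleftrightarrow> (\<forall>v\<in>VK. f v \<in> VK) \<and> (\<forall>F\<in>FK. f ` F \<in> FK)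
      \<and> (\<forall>v\<in>VK. f ` eta G v = eta G (f v))"

lemma induced_in_AutX:
  assumes f: "induces_aut f" and h: "induces_aut h" and hf: "\<And>p. h (f p) = p" and fh: "\<And>p. f (h p) = p"
  shows "(\<lambda>X. f ` X) \<in> AutX G"
proof -
  have vert: "(\<lambda>X. k ` X) ` VertX G \<subseteq> VertX G" if k: "induces_aut k" for k
    using k unfolding induces_aut_def VertX_def by auto
  have face: "(\<lambda>X. k ` X) ` A \<in> FaceX G" if k: "induces_aut k" and A: "A \<in> FaceX G" for k A
  proof -
    obtain F where F: "F \<in> FK" "A = eta G ` F" using A by (auto simp: FaceX_def)
    have "(\<lambda>X. k ` X) ` A = (\<lambda>v. k ` eta G v) ` F" by (simp add: F(2) image_image)
    also have "\<dots> = (\<lambda>v. eta G (k v)) ` F"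
    proof (rule image_cong[OF refl])
      fix v assume "v \<in> F"
      then show "k ` eta G v = eta G (k v)"
        using k FK_subset_VK[OF F(1)] unfolding induces_aut_def by blast
    qed
    also have "\<dots> = eta G ` (k ` F)" by (simp add: image_image)
    finally show ?thesis using k F(1) unfolding induces_aut_def FaceX_def by blast
  qed
  have hfX: "h ` (f ` X) = X" and fhX: "f ` (h ` X) = X" for X
    by (simp_all add: image_image hf fh)
  have "bij_betw (\<lambda>X. f ` X) (VertX G) (VertX G)"
    by (rule bij_betw_byWitness[where f' = "\<lambda>X. h ` X"]) (simp_all add: hfX fhX vert f h)
  moreover have "A \<in> FaceX G \<longleftrightarrow> (\<lambda>X. f ` X) ` A \<in> FaceX G" for A
  proof
    assume "(\<lambda>X. f ` X) ` A \<in> FaceX G"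
    from face[OF h this] show "A \<in> FaceX G" by (simp add: image_image hf)
  qed (rule face[OF f])
  ultimately show ?thesis by (simp add: AutX_def)
qed

lemma induces_aut_translate:
  assumes u: "res3 u = (0,0)" shows "induces_aut (\<lambda>p. p + u)"
  unfolding induces_aut_def
proof (intro conjI ballI)
  fix v assume v: "v \<in> VK"
  then show vu: "v + u \<in> VK" using hex_centre_translate[OF u] by (simp add: in_VK_iff)
  show "(\<lambda>p. p + u) ` eta G v = eta G (v + u)"
    unfolding eta_eq[OF v] eta_eq[OF vu] by (simp add: image_image algebra_simps)
next
  fix F assume "F \<in> FK"
  have "(\<lambda>p. eis_mult (1,0) p + u) ` F \<in> FK"
    by (rule affine_image_FK) (simp_all add: unit_vecs_def hex_centre_translate[OF u] \<open>F \<in> FK\<close>)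
  then show "(\<lambda>p. p + u) ` F \<in> FK" by simp
qed

lemma induces_aut_half_turn: "induces_aut (\<lambda>p. (4,4) - p)"
  unfolding induces_aut_def
proof (intro conjI ballI)
  fix v assume v: "v \<in> VK"
  then show vr: "(4,4) - v \<in> VK" using hex_centre_half_turn by (simp add: in_VK_iff)
  have "(\<lambda>p. (4,4) - p) ` eta G v = (\<lambda>w. (4,4) - v + w) ` (uminus ` transl_vecs)"
    unfolding eta_eq[OF v] by (simp add: image_image algebra_simps)
  then show "(\<lambda>p. (4,4) - p) ` eta G v = eta G ((4,4) - v)"
    unfolding eta_eq[OF vr] uminus_transl_vecs .
next
  fix F assume "F \<in> FK"
  have half_turn: "eis_mult (-1,0) p + (4,4) = (4,4) - p" for p
    by (simp add: eis_mult_def prod_eq_iff)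
  have "(\<lambda>p. eis_mult (-1,0) p + (4,4)) ` F \<in> FK"
    by (rule affine_image_FK) (simp_all add: unit_vecs_def half_turn hex_centre_half_turn \<open>F \<in> FK\<close>)
  then show "(\<lambda>p. (4,4) - p) ` F \<in> FK" by (simp only: half_turn)
qed

lemma AutX_orbit_translate:
  assumes v: "v \<in> VK" and u: "res3 u = (0,0)"
  shows "AutX_orbit G (eta G (v + u)) = AutX_orbit G (eta G v)"
proof -
  have u': "res3 (- u) = (0,0)" using u by (simp add: res3_def zmod_zminus1_eq_if)
  have M: "(\<lambda>X. (\<lambda>p. p + u) ` X) \<in> AutX G" and M': "(\<lambda>X. (\<lambda>p. p + - u) ` X) \<in> AutX G"
    using induced_in_AutX induces_aut_translate[OF u] induces_aut_translate[OF u'] by auto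
  have "(\<lambda>p. p + - u) ` (\<lambda>p. p + u) ` eta G v = eta G v" by (simp add: image_image)
  from AutX_orbit_eq[OF M M' this]
  have "AutX_orbit G ((\<lambda>p. p + u) ` eta G v) = AutX_orbit G (eta G v)" .
  moreover have "(\<lambda>p. p + u) ` eta G v = eta G (v + u)"
    using induces_aut_translate[OF u] v unfolding induces_aut_def by blast
  ultimately show ?thesis by simp
qed

lemma AutX_orbit_half_turn:
  assumes v: "v \<in> VK"
  shows "AutX_orbit G (eta G ((4,4) - v)) = AutX_orbit G (eta G v)"
proof -
  have M: "(\<lambda>X. (\<lambda>p. (4,4) - p) ` X) \<in> AutX G"
    using induced_in_AutX induces_aut_half_turn by auto
  have "(\<lambda>p. (4,4) - p) ` (\<lambda>p. (4,4) - p) ` eta G v = eta G v" by (simp add: image_image)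
  from AutX_orbit_eq[OF M M this]
  have "AutX_orbit G ((\<lambda>p. (4,4) - p) ` eta G v) = AutX_orbit G (eta G v)" .
  moreover have "(\<lambda>p. (4,4) - p) ` eta G v = eta G ((4,4) - v)"
    using induces_aut_half_turn v unfolding induces_aut_def by blast
  ultimately show ?thesis by simp
qed

lemma AutX_orbit_representative:
  assumes v: "v \<in> VK"
  shows "AutX_orbit G (eta G v) \<in> (\<lambda>r. AutX_orbit G (eta G r)) ` {(2,2), (1,0), (1,2), (2,1)}"
proof -
  define r where "r = res3 v"
  have u: "res3 (v - r) = (0,0)"
    by (simp add: r_def res3_def mod_diff_eq[symmetric])
  have "res3 r = res3 v" by (simp add: r_def res3_def)
  then have r: "r \<in> VK" using v by (simp add: in_VK_iff hex_centre_iff_res3)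
  have "AutX_orbit G (eta G v) = AutX_orbit G (eta G r)"
    using AutX_orbit_translate[OF r u] by simp
  moreover have shift: "AutX_orbit G (eta G p) = AutX_orbit G (eta G q)"
    if "p = (4,4) - q + w" "res3 w = (0,0)" "q \<in> VK" for p q w
    using AutX_orbit_translate[of "(4,4) - q" w] AutX_orbit_half_turn[of q] that
    by (simp add: in_VK_iff hex_centre_half_turn)
  have "AutX_orbit G (eta G (1,0)) = AutX_orbit G (eta G (0,1))"
    by (rule shift[where w = "(-3,-3)"]) (simp_all add: res3_def in_VK_iff hex_centre_def)
  moreover have "AutX_orbit G (eta G (1,2)) = AutX_orbit G (eta G (0,2))"
    by (rule shift[where w = "(-3,0)"]) (simp_all add: res3_def in_VK_iff hex_centre_def)
  moreover have "AutX_orbit G (eta G (2,1)) = AutX_orbit G (eta G (2,0))"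
    by (rule shift[where w = "(0,-3)"]) (simp_all add: res3_def in_VK_iff hex_centre_def)
  moreover have "r \<in> {0,1,2} \<times> {0,1,2}" "\<not> hex_centre r"
    using res3_cases[of v] r by (simp_all add: r_def in_VK_iff)
  ultimately show ?thesis by (auto simp: hex_centre_def)
qed

lemma card_AutX_orbits: "card (AutX_orbits G) \<le> 4"
proof -
  have "AutX_orbits G \<subseteq> (\<lambda>r. AutX_orbit G (eta G r)) ` {(2,2), (1,0), (1,2), (2,1)}"
    unfolding AutX_orbits_eq VertX_def using AutX_orbit_representative by auto
  then have "card (AutX_orbits G) \<le> card {(2::int,2::int), (1,0), (1,2), (2,1)}"
    by (meson card_image_le card_mono finite.emptyI finite.insertI finite_imageI order_trans)
  then show ?thesis by simp
qed

end

theorem theorem1: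
  fixes \<Gamma> :: "(pt \<Rightarrow> pt) set"
  assumes "torus_quotient \<Gamma>"
      and "polyhedral_quotient \<Gamma>"
  shows "card (AutX_orbits \<Gamma>) \<le> 4"
proof -
  interpret torus_quotient_group \<Gamma> using assms(1) by unfold_locales
  show ?thesis by (rule card_AutX_orbits)
qed

end
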